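(* Let $H$ be a subgroup of Thompson's group $F$. Assume that for every pair of finite binary words $u$ and $v$, each of which contains both digits $0$ and $1$, there is an element $h\in H$ with the pair of branches $u\rightarrow v$. Then $\mathrm{Cl}(H)$ contains the derived subgroup $[F,F]$.
   Context: Thompson's group $F$ is the group of all piecewise linear homeomorphisms of $[0,1]$ with finitely many breakpoints, all breakpoints dyadic fractions and all slopes integer powers of $2$. For a finite binary word $u$, let $[u]$ denote the dyadic interval $[.u,\,.u111\ldots]$ (numbers whose binary expansion begins with $u$). An element $h\in F$ has the pair of branches $u\rightarrow v$ if $h$ maps $[u]$ linearly onto $[v]$, i.e. $h(.u\alpha)=.v\alpha$ for every infinite binary word $\alpha$. For $H\le F$, the closure $\mathrm{Cl}(H)$ is the subgroup of $F$ consisting of all piecewise-$H$ functions: those $f\in F$ for which there is a finite subdivision of $[0,1]$ into intervals such that on each interval $f$ coincides with some element of $H$. *)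

theory Defs
  imports "HOL-Analysis.Analysis" "HOL-Algebra.Generated_Groups"
begin

definition dyadic :: "real \<Rightarrow> bool" where
  "dyadic x \<longleftrightarrow> (\<exists>(k::int) (n::nat). x = of_int k / 2 ^ n)"

definition subdivision01 :: "real list \<Rightarrow> bool" where
  "subdivision01 xs \<longleftrightarrow> length xs \<ge> 2 \<and> sorted_wrt (<) xs \<and> hd xs = 0 \<and> last xs = 1"

definition thompsonF_set :: "(real \<Rightarrow> real) set" where
  "thompsonF_set = {f. (\<forall>x. x \<notin> {0..1} \<longrightarrow> f x = x)
      \<and> (\<exists>g. homeomorphism {0..1} {0..1} f g)
      \<and> (\<exists>xs. subdivision01 xs \<and> (\<forall>x\<in>set xs. dyadic x)
           \<and> (\<forall>i < length xs - 1. \<exists>(k::int) (b::real).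
                 \<forall>x\<in>{xs!i .. xs!(i+1)}. f x = 2 powi k * x + b))}"

definition thompsonF :: "(real \<Rightarrow> real) monoid" where
  "thompsonF = \<lparr>carrier = thompsonF_set, mult = (\<lambda>f g. f \<circ> g), one = id\<rparr>"

text \<open>Finite binary words are bool lists (True = digit 1, False = digit 0).\<close>
definition word_val :: "bool list \<Rightarrow> real" where
  "word_val u = (\<Sum>i<length u. (if u!i then 1 else 0) / 2 ^ (Suc i))"

definition inf_val :: "(nat \<Rightarrow> bool) \<Rightarrow> real" where
  "inf_val \<alpha> = (\<Sum>i. (if \<alpha> i then 1 else 0) / 2 ^ (Suc i))"

definition has_branches :: "(real \<Rightarrow> real) \<Rightarrow> bool list \<Rightarrow> bool list \<Rightarrow> bool" where
  "has_branches h u v \<longleftrightarrow> (\<forall>\<alpha>.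
      h (word_val u + inf_val \<alpha> / 2 ^ length u) = word_val v + inf_val \<alpha> / 2 ^ length v)"

definition thompson_closure :: "(real \<Rightarrow> real) set \<Rightarrow> (real \<Rightarrow> real) set" where
  "thompson_closure H = {f \<in> thompsonF_set. \<exists>xs. subdivision01 xs \<and>
      (\<forall>i < length xs - 1. \<exists>g\<in>H. \<forall>x\<in>{xs!i .. xs!(i+1)}. f x = g x)}"

end

(*
  The slopes of an element of F at 0 and at 1 are multiplicative under composition, so every
  commutator, and hence every element of [F,F], is the identity on neighbourhoods of 0 and 1.

  For f in F and every sufficiently large M, f maps each standard dyadic interval
  [i/2^M, (i+1)/2^M] affinely onto a standard dyadic interval [n/2^L, (n+1)/2^L]; that is,
  there f has the pair of branches u -> v, where u and v are the binary words of length M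
  and L of i and n.  The same description shows that F is closed under composition.

  If f fixes neighbourhoods of 0 and 1, it is the identity on the two end intervals.  On an
  interior interval both u and v contain both digits, so by hypothesis some h in H has the
  pair of branches u -> v, and h agrees with f there.
*)

theory Submission
  imports Defs
begin

definition dyadic_level :: "nat \<Rightarrow> real \<Rightarrow> bool" where
  "dyadic_level V x \<longleftrightarrow> (\<exists>m::int. x = of_int m / 2 ^ V)"

lemma dyadic_iff_dyadic_level: "dyadic x \<longleftrightarrow> (\<exists>V. dyadic_level V x)"
  unfolding dyadic_def dyadic_level_def by blast

lemma dyadic_level_mono:
  assumes "dyadic_level V x" "V \<le> W"
  shows "dyadic_level W x"
proof -
  obtain m where x: "x = of_int m / 2 ^ V"
    using assms(1) by (auto simp: dyadic_level_def)
  have "(2::real) ^ W = 2 ^ V * 2 ^ (W - V)"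
    using assms(2) by (simp flip: power_add)
  then have "x = of_int (m * 2 ^ (W - V)) / 2 ^ W"
    by (simp add: x)
  then show ?thesis
    unfolding dyadic_level_def by blast
qed

lemma dyadic_level_finite:
  assumes "finite A" "\<forall>x\<in>A. dyadic x"
  shows "\<exists>V. \<forall>x\<in>A. dyadic_level V x"
  using assms
proof (induction A rule: finite_induct)
  case (insert a A)
  then obtain V V' where "\<forall>x\<in>A. dyadic_level V x" "dyadic_level V' a"
    by (auto simp: dyadic_iff_dyadic_level)
  then show ?case
    by (metis dyadic_level_mono insertE max.cobounded1 max.cobounded2)
qed simp

lemma dyadic_level_add: "dyadic_level V x \<Longrightarrow> dyadic_level V y \<Longrightarrow> dyadic_level V (x + y)"
  unfolding dyadic_level_def by (metis add_divide_distrib of_int_add)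

lemma dyadic_add: "dyadic x \<Longrightarrow> dyadic y \<Longrightarrow> dyadic (x + y)"
  unfolding dyadic_iff_dyadic_level
  by (meson dyadic_level_add dyadic_level_mono max.cobounded1 max.cobounded2)

lemma dyadic_minus: "dyadic x \<Longrightarrow> dyadic (- x)"
  unfolding dyadic_def by (metis minus_divide_left of_int_minus)

lemma dyadic_diff: "dyadic x \<Longrightarrow> dyadic y \<Longrightarrow> dyadic (x - y)"
  using dyadic_add[of x "- y"] dyadic_minus by simp

lemma dyadic_powi_mult:
  assumes "dyadic x"
  shows "dyadic (2 powi k * x)"
proof -
  obtain V m where x: "x = of_int m / 2 ^ V"
    using assms by (auto simp: dyadic_def)
  obtain a b :: nat where k: "k = int a - int b"
    by (metis int_diff_cases)
  have "(2::real) powi k = 2 ^ a / 2 ^ b"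
    by (simp add: k power_int_diff)
  then have "2 powi k * x = of_int (m * 2 ^ a) / 2 ^ (V + b)"
    by (simp add: x power_add ac_simps)
  then show ?thesis
    unfolding dyadic_def by blast
qed

lemma subdivision01_length: "subdivision01 xs \<Longrightarrow> 2 \<le> length xs"
  by (simp add: subdivision01_def)

lemma subdivision01_nth_first: "subdivision01 xs \<Longrightarrow> xs ! 0 = 0"
  unfolding subdivision01_def by (metis hd_conv_nth list.size(3) not_numeral_le_zero)

lemma subdivision01_nth_last: "subdivision01 xs \<Longrightarrow> xs ! (length xs - 1) = 1"
  unfolding subdivision01_def by (metis last_conv_nth list.size(3) not_numeral_le_zero)

lemma subdivision01_nth_less:
  "subdivision01 xs \<Longrightarrow> i < j \<Longrightarrow> j < length xs \<Longrightarrow> xs ! i < xs ! j"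
  by (auto simp: subdivision01_def sorted_wrt_nth_less)

lemma subdivision01_piece_less:
  "subdivision01 xs \<Longrightarrow> j < length xs - 1 \<Longrightarrow> xs ! j < xs ! (j + 1)"
  by (simp add: subdivision01_nth_less)

lemma subdivision01_nth_le:
  assumes "subdivision01 xs" "i \<le> j" "j < length xs"
  shows "xs ! i \<le> xs ! j"
  using subdivision01_nth_less[OF assms(1), of i j] assms(2,3) by (auto simp: le_less)

lemma subdivision01_nth_bounds:
  assumes "subdivision01 xs" "i < length xs"
  shows "xs ! i \<in> {0..1}"
  using subdivision01_nth_le[OF assms(1), of 0 i] subdivision01_nth_le[OF assms(1), of i "length xs - 1"]
    subdivision01_nth_first[OF assms(1)] subdivision01_nth_last[OF assms(1)] assms(2)
  by auto

lemma subdivision01_piece_subset: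
  assumes "subdivision01 xs" "j < length xs - 1"
  shows "{xs ! j .. xs ! (j + 1)} \<subseteq> {0..1}"
  using subdivision01_nth_bounds[OF assms(1), of j] subdivision01_nth_bounds[OF assms(1), of "j + 1"]
    assms(2) by auto

lemma subdivision01_piece_ends:
  assumes "subdivision01 xs" "j < length xs - 1" "\<forall>x\<in>{xs!j .. xs!(j+1)}. f x = 2 powi k * x + b"
  shows "f (xs!j) = 2 powi k * xs!j + b" "f (xs!(j+1)) = 2 powi k * xs!(j+1) + b"
  using subdivision01_piece_less[OF assms(1,2)] assms(3) by auto

lemma subdivision01_bracket:
  assumes xs: "subdivision01 xs" and "0 \<le> a" "a < 1"
  obtains j where "j < length xs - 1" "xs ! j \<le> a" "a < xs ! (j + 1)"
proof -
  define J where "J = {j. j < length xs \<and> xs ! j \<le> a}"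
  have "0 \<in> J" "finite J"
    using assms subdivision01_length[OF xs] subdivision01_nth_first[OF xs] by (auto simp: J_def)
  define j where "j = Max J"
  have "j \<in> J"
    using \<open>0 \<in> J\<close> \<open>finite J\<close> Max_in unfolding j_def by blast
  moreover have "j \<noteq> length xs - 1"
    using \<open>a < 1\<close> subdivision01_nth_last[OF xs] calculation by (auto simp: J_def)
  ultimately have "j < length xs - 1"
    by (auto simp: J_def)
  moreover have "j + 1 \<notin> J"
    using Max_ge[OF \<open>finite J\<close>] j_def by fastforce
  ultimately show thesis
    using that \<open>j \<in> J\<close> by (auto simp: J_def)
qed

lemma subdivision01_map:
  assumes xs: "subdivision01 xs"
    and f: "strict_mono_on {0..1} f" "f 0 = 0" "f 1 = 1"
  shows "subdivision01 (map f xs)"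
proof -
  have "set xs \<subseteq> {0..1}"
    using subdivision01_nth_bounds[OF xs] by (auto simp: in_set_conv_nth)
  moreover have "sorted_wrt (<) xs" "xs \<noteq> []"
    using xs by (auto simp: subdivision01_def)
  ultimately have "sorted_wrt (\<lambda>x y. f x < f y) xs"
    using f(1) by (auto simp: sorted_wrt_iff_nth_less monotone_on_def subset_iff)
  then show ?thesis
    using xs f \<open>xs \<noteq> []\<close> by (auto simp: subdivision01_def sorted_wrt_map hd_map last_map)
qed

definition dyadic_cell :: "nat \<Rightarrow> nat \<Rightarrow> real set" where
  "dyadic_cell M i = {real i / 2 ^ M .. (real i + 1) / 2 ^ M}"

definition uniform_subdivision :: "nat \<Rightarrow> real list" where
  "uniform_subdivision M = map (\<lambda>j. real j / 2 ^ M) [0..<2 ^ M + 1]"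

lemma length_uniform_subdivision [simp]: "length (uniform_subdivision M) = 2 ^ M + 1"
  by (simp add: uniform_subdivision_def)

lemma nth_uniform_subdivision: "i \<le> 2 ^ M \<Longrightarrow> uniform_subdivision M ! i = real i / 2 ^ M"
  by (simp add: uniform_subdivision_def less_Suc_eq_le del: upt_Suc)

lemma subdivision01_uniform: "subdivision01 (uniform_subdivision M)"
  unfolding subdivision01_def
proof (intro conjI)
  have "sorted_wrt (\<lambda>i j. real i / 2 ^ M < real j / (2::real) ^ M) [0..<2 ^ M + 1]"
    by (rule sorted_wrt_mono_rel[OF _ sorted_wrt_upt]) (simp add: divide_strict_right_mono)
  then show "sorted_wrt (<) (uniform_subdivision M)"
    by (simp add: uniform_subdivision_def sorted_wrt_map del: upt_Suc)
  have "uniform_subdivision M \<noteq> []"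
    by (simp add: uniform_subdivision_def del: upt_Suc)
  then show "hd (uniform_subdivision M) = 0" "last (uniform_subdivision M) = 1"
    by (simp_all add: hd_conv_nth last_conv_nth nth_uniform_subdivision)
qed simp

lemma uniform_subdivision_piece:
  "i < 2 ^ M \<Longrightarrow> {uniform_subdivision M ! i .. uniform_subdivision M ! (i + 1)} = dyadic_cell M i"
  by (simp add: nth_uniform_subdivision dyadic_cell_def)

lemma dyadic_cell_subset:
  assumes "i < 2 ^ M"
  shows "dyadic_cell M i \<subseteq> {0..1}"
proof -
  have "real (i + 1) \<le> real ((2::nat) ^ M)"
    using assms by (simp only: of_nat_le_iff)
  then show ?thesis
    by (auto simp: dyadic_cell_def field_simps)
qed

lemma thompsonF_fixes_outside: "f \<in> thompsonF_set \<Longrightarrow> x \<notin> {0..1} \<Longrightarrow> f x = x"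
  unfolding thompsonF_set_def by blast

lemma thompsonF_homeomorphism:
  assumes "f \<in> thompsonF_set"
  obtains g where "homeomorphism {0..1} {0..1} f g"
  using assms unfolding thompsonF_set_def by blast

lemma thompsonF_pieces:
  assumes "f \<in> thompsonF_set"
  obtains xs where "subdivision01 xs" "\<forall>x\<in>set xs. dyadic x"
    "\<forall>j < length xs - 1. \<exists>(k::int) b. \<forall>x\<in>{xs!j .. xs!(j+1)}. f x = 2 powi k * x + b"
  using assms unfolding thompsonF_set_def by blast

lemma thompsonF_image:
  assumes "f \<in> thompsonF_set"
  shows "f ` {0..1} = {0..1}"
proof -
  obtain g where "homeomorphism {0..1} {0..1} f g"
    using assms by (rule thompsonF_homeomorphism)
  then show ?thesis
    by (rule homeomorphism_image1)
qed

lemma thompsonF_strict_mono: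
  assumes "f \<in> thompsonF_set"
  shows "strict_mono_on {0..1} f"
proof -
  obtain g where hom: "homeomorphism {0..1} {0..1} f g"
    using assms by (rule thompsonF_homeomorphism)
  have "continuous_on {0..1} f" "inj_on f {0..1}"
    using hom by (auto simp: homeomorphism_def intro: inj_on_inverseI)
  then have mono_or_anti: "strict_mono_on {0..1} f \<or> strict_antimono_on {0..1} f"
    using injective_eq_monotone_map[of "{0..1}" f] by auto
  obtain xs where xs: "subdivision01 xs"
    and pieces: "\<forall>j < length xs - 1. \<exists>(k::int) b. \<forall>x\<in>{xs!j .. xs!(j+1)}. f x = 2 powi k * x + b"
    using assms by (rule thompsonF_pieces)
  have len: "0 < length xs - 1"
    using subdivision01_length[OF xs] by simp
  obtain k b where kb: "\<forall>x\<in>{xs!0 .. xs!(0+1)}. f x = 2 powi k * x + b"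
    using pieces len by blast
  have lt: "xs!0 < xs!1"
    using subdivision01_piece_less[OF xs len] by simp
  have "f (xs!0) = 2 powi k * xs!0 + b" "f (xs!1) = 2 powi k * xs!1 + b"
    using kb lt by auto
  then have "f (xs!0) < f (xs!1)"
    using lt by simp
  moreover have "xs!0 \<in> {0..1}" "xs!1 \<in> {0..1}"
    using subdivision01_piece_subset[OF xs len] lt by auto
  ultimately show ?thesis
    using mono_or_anti lt by (metis monotone_onD order_less_asym)
qed

lemma thompsonF_endpoints:
  assumes "f \<in> thompsonF_set"
  shows "f 0 = 0" "f 1 = 1"
proof -
  have mono: "strict_mono_on {0..1} f" and im: "f ` {0..1} = {0..1}"
    using assms thompsonF_strict_mono thompsonF_image by auto
  have "0 \<in> f ` {0..1}" "1 \<in> f ` {0..1}"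
    using im by auto
  then obtain x0 x1 where x: "x0 \<in> {0..1}" "f x0 = 0" "x1 \<in> {0..1}" "f x1 = 1"
    by (metis imageE)
  have "f 0 \<le> f x0"
    using monotone_onD[OF mono, of 0 x0] x(1) by (cases "x0 = 0") auto
  moreover have "f x1 \<le> f 1"
    using monotone_onD[OF mono, of x1 1] x(3) by (cases "x1 = 1") auto
  moreover have "f 0 \<in> {0..1}" "f 1 \<in> {0..1}"
    using im by auto
  ultimately show "f 0 = 0" "f 1 = 1"
    using x by auto
qed

lemma thompsonF_dyadic_values:
  assumes f: "f \<in> thompsonF_set" and xs: "subdivision01 xs" and dy: "\<forall>x\<in>set xs. dyadic x"
    and pieces: "\<forall>j < length xs - 1. \<exists>(k::int) b. \<forall>x\<in>{xs!j .. xs!(j+1)}. f x = 2 powi k * x + b"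
  shows "\<forall>x\<in>set xs. dyadic (f x)"
proof -
  have "dyadic (f (xs!j))" if "j < length xs" for j
    using that
  proof (induction j)
    case 0
    then show ?case
      using subdivision01_nth_first[OF xs] thompsonF_endpoints[OF f] by (simp add: dyadic_def)
  next
    case (Suc j)
    then have j: "j < length xs - 1"
      by simp
    then obtain k b where kb: "\<forall>x\<in>{xs!j .. xs!(j+1)}. f x = 2 powi k * x + b"
      using pieces by blast
    have "f (xs!(j+1)) = f (xs!j) + 2 powi k * (xs!(j+1) - xs!j)"
      using subdivision01_piece_ends[OF xs j kb] by (simp add: algebra_simps)
    then show ?case
      using Suc j dy by (simp add: dyadic_add dyadic_diff dyadic_powi_mult)
  qed
  then show ?thesis
    by (auto simp: in_set_conv_nth)
qed

lemma thompsonF_dyadic_pieces: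
  assumes f: "f \<in> thompsonF_set"
  obtains xs where "subdivision01 xs" "\<forall>x\<in>set xs. dyadic x" "\<forall>x\<in>set xs. dyadic (f x)"
    "\<forall>j < length xs - 1. \<exists>(k::int) b. dyadic b \<and> (\<forall>x\<in>{xs!j .. xs!(j+1)}. f x = 2 powi k * x + b)"
proof -
  obtain xs where xs: "subdivision01 xs" and dy: "\<forall>x\<in>set xs. dyadic x"
    and pieces: "\<forall>j < length xs - 1. \<exists>(k::int) b. \<forall>x\<in>{xs!j .. xs!(j+1)}. f x = 2 powi k * x + b"
    using f by (rule thompsonF_pieces)
  have dyadic_values: "\<forall>x\<in>set xs. dyadic (f x)"
    using f xs dy pieces by (rule thompsonF_dyadic_values)
  have "\<exists>(k::int) b. dyadic b \<and> (\<forall>x\<in>{xs!j .. xs!(j+1)}. f x = 2 powi k * x + b)"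
    if j: "j < length xs - 1" for j
  proof -
    obtain k b where kb: "\<forall>x\<in>{xs!j .. xs!(j+1)}. f x = 2 powi k * x + b"
      using pieces j by blast
    then have "b = f (xs!j) - 2 powi k * xs!j"
      using subdivision01_piece_ends[OF xs j kb] by simp
    moreover have "xs!j \<in> set xs"
      using j by simp
    ultimately have "dyadic b"
      using dyadic_values dy by (simp add: dyadic_diff dyadic_powi_mult)
    then show ?thesis
      using kb by blast
  qed
  then show thesis
    using that xs dy dyadic_values by blast
qed

lemma affine_piece_inverse:
  fixes f g :: "real \<Rightarrow> real"
  assumes "a \<le> b" and f: "\<forall>x\<in>{a..b}. f x = 2 powi k * x + c" and g: "\<forall>x\<in>{a..b}. g (f x) = x"
  shows "\<forall>y\<in>{f a..f b}. g y = 2 powi (-k) * y - 2 powi (-k) * c"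
proof
  fix y assume y: "y \<in> {f a..f b}"
  define x where "x = (y - c) / 2 powi k"
  have "f a = 2 powi k * a + c" "f b = 2 powi k * b + c"
    using f \<open>a \<le> b\<close> by auto
  then have "2 powi k * a \<le> 2 powi k * x" "2 powi k * x \<le> 2 powi k * b"
    using y by (auto simp: x_def)
  then have "x \<in> {a..b}"
    by simp
  moreover have "f x = y"
    using f \<open>x \<in> {a..b}\<close> by (simp add: x_def)
  ultimately have "g y = x"
    using g by force
  then show "g y = 2 powi (-k) * y - 2 powi (-k) * c"
    by (simp add: x_def power_int_minus_divide field_simps)
qed

lemma thompsonF_inverse_pieces:
  assumes f: "f \<in> thompsonF_set" and gf: "\<And>x. x \<in> {0..1} \<Longrightarrow> g (f x) = x"
  obtains ys where "subdivision01 ys" "\<forall>y\<in>set ys. dyadic y"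
    "\<forall>j < length ys - 1. \<exists>(k::int) b. \<forall>y\<in>{ys!j .. ys!(j+1)}. g y = 2 powi k * y + b"
proof -
  obtain xs where xs: "subdivision01 xs" and "\<forall>x\<in>set xs. dyadic x"
    and dyadic_values: "\<forall>x\<in>set xs. dyadic (f x)"
    and pieces: "\<forall>j < length xs - 1. \<exists>(k::int) b. dyadic b \<and> (\<forall>x\<in>{xs!j .. xs!(j+1)}. f x = 2 powi k * x + b)"
    using f by (rule thompsonF_dyadic_pieces)
  have "\<exists>(k::int) b. \<forall>y\<in>{map f xs ! j .. map f xs ! (j+1)}. g y = 2 powi k * y + b"
    if j: "j < length (map f xs) - 1" for j
  proof -
    have j': "j < length xs - 1"
      using j by simp
    then obtain k b where kb: "\<forall>x\<in>{xs!j .. xs!(j+1)}. f x = 2 powi k * x + b"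
      using pieces by blast
    have le: "xs!j \<le> xs!(j+1)"
      using subdivision01_piece_less[OF xs j'] by simp
    have "\<forall>x\<in>{xs!j .. xs!(j+1)}. g (f x) = x"
      using subdivision01_piece_subset[OF xs j'] gf by blast
    then have "\<forall>y\<in>{f (xs!j) .. f (xs!(j+1))}. g y = 2 powi (-k) * y - 2 powi (-k) * b"
      by (rule affine_piece_inverse[OF le kb])
    then show ?thesis
      using j by (intro exI[of _ "-k"] exI[of _ "-(2 powi (-k) * b)"]) simp
  qed
  moreover have "subdivision01 (map f xs)"
    using xs thompsonF_strict_mono[OF f] thompsonF_endpoints[OF f] by (rule subdivision01_map)
  moreover have "\<forall>y\<in>set (map f xs). dyadic y"
    using dyadic_values by simp
  ultimately show thesis
    using that by blast
qed

lemma thompsonF_inverse: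
  assumes f: "f \<in> thompsonF_set"
  obtains g where "g \<in> thompsonF_set" "f \<circ> g = id" "g \<circ> f = id"
proof -
  obtain g' where hom: "homeomorphism {0..1} {0..1} f g'"
    using f by (rule thompsonF_homeomorphism)
  define g where "g y = (if y \<in> {0..1} then g' y else y)" for y
  have fix_out: "f x = x" if "x \<notin> {0..1}" for x
    using f that by (rule thompsonF_fixes_outside)
  have f_01: "f x \<in> {0..1}" if "x \<in> {0..1}" for x
    using homeomorphism_image1[OF hom] that by blast
  have gf_01: "g (f x) = x" if "x \<in> {0..1}" for x
    using that f_01[OF that] homeomorphism_apply1[OF hom] by (simp add: g_def)
  have fg: "f \<circ> g = id"
  proof
    fix y
    show "(f \<circ> g) y = id y"
      using fix_out homeomorphism_apply2[OF hom] by (cases "y \<in> {0..1}") (simp_all add: g_def)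
  qed
  have gf: "g \<circ> f = id"
  proof
    fix x
    show "(g \<circ> f) x = id x"
    proof (cases "x \<in> {0..1}")
      case False
      then have "g x = x"
        by (simp only: g_def if_False)
      then show ?thesis
        using fix_out[OF False] by simp
    qed (simp add: gf_01)
  qed
  obtain ys where "subdivision01 ys" "\<forall>y\<in>set ys. dyadic y"
    "\<forall>j < length ys - 1. \<exists>(k::int) b. \<forall>y\<in>{ys!j .. ys!(j+1)}. g y = 2 powi k * y + b"
    using f gf_01 by (rule thompsonF_inverse_pieces)
  moreover have "homeomorphism {0..1} {0..1} g f"
    by (rule homeomorphism_cong[OF homeomorphism_symD[OF hom]]) (simp_all add: g_def)
  moreover have "\<forall>x. x \<notin> {0..1} \<longrightarrow> g x = x"
    by (simp add: g_def)
  ultimately have "g \<in> thompsonF_set"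
    unfolding thompsonF_set_def by blast
  then show thesis
    using that fg gf by blast
qed

(* For i < 2^M and n < 2^L this is the pair of branches binary_word M i -> binary_word L n. *)
definition cell_branch :: "(real \<Rightarrow> real) \<Rightarrow> nat \<Rightarrow> nat \<Rightarrow> nat \<Rightarrow> nat \<Rightarrow> bool" where
  "cell_branch f M i L n \<longleftrightarrow> (\<forall>x\<in>dyadic_cell M i. f x = (real n + 2 ^ M * x - real i) / 2 ^ L)"

lemma dyadic_cell_iff: "x \<in> dyadic_cell M i \<longleftrightarrow> 0 \<le> 2 ^ M * x - real i \<and> 2 ^ M * x - real i \<le> 1"
  by (auto simp: dyadic_cell_def field_simps)

lemma cell_branch_maps_into:
  assumes "cell_branch f M i L n" "x \<in> dyadic_cell M i"
  shows "f x \<in> dyadic_cell L n"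
  using assms by (simp add: cell_branch_def dyadic_cell_iff)

lemma cell_branch_comp:
  assumes g: "cell_branch g M i L n" and f: "cell_branch f L n L' n'"
  shows "cell_branch (f \<circ> g) M i L' n'"
  unfolding cell_branch_def
proof
  fix x assume x: "x \<in> dyadic_cell M i"
  have "f (g x) = (real n' + 2 ^ L * g x - real n) / 2 ^ L'"
    using f cell_branch_maps_into[OF g x] by (simp add: cell_branch_def)
  also have "2 ^ L * g x = real n + 2 ^ M * x - real i"
    using g x by (simp add: cell_branch_def)
  finally show "(f \<circ> g) x = (real n' + 2 ^ M * x - real i) / 2 ^ L'"
    by simp
qed

lemma cell_branch_affine:
  assumes "cell_branch f M i L n"
  shows "\<forall>x\<in>dyadic_cell M i. f x = 2 powi (int M - int L) * x + (real n - real i) / 2 ^ L"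
proof
  fix x assume "x \<in> dyadic_cell M i"
  then have "f x = (real n + 2 ^ M * x - real i) / 2 ^ L"
    using assms by (simp add: cell_branch_def)
  also have "\<dots> = 2 powi (int M - int L) * x + (real n - real i) / 2 ^ L"
    by (simp add: power_int_diff field_simps)
  finally show "f x = 2 powi (int M - int L) * x + (real n - real i) / 2 ^ L" .
qed

lemma cell_branch_of_affine:
  assumes f: "\<forall>x\<in>dyadic_cell M i. f x = 2 powi (int M - int L) * x + b"
    and b: "dyadic_level L b" and into: "f ` dyadic_cell M i \<subseteq> {0..1}"
  obtains n where "n < 2 ^ L" "cell_branch f M i L n"
proof -
  obtain m where m: "b = of_int m / 2 ^ L"
    using b by (auto simp: dyadic_level_def)
  define p where "p = m + int i"
  have fx: "f x = (of_int p + 2 ^ M * x - real i) / 2 ^ L" if "x \<in> dyadic_cell M i" for x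
    using f that by (simp add: m p_def power_int_diff field_simps)
  have lo: "real i / 2 ^ M \<in> dyadic_cell M i" and hi: "(real i + 1) / 2 ^ M \<in> dyadic_cell M i"
    by (auto simp: dyadic_cell_def divide_right_mono)
  have "of_int p / 2 ^ L \<in> {0..1::real}" "(of_int p + 1) / 2 ^ L \<in> {0..1::real}"
    using into fx[OF lo] fx[OF hi] lo hi by (auto simp: image_subset_iff)
  then have "0 \<le> real_of_int p" "real_of_int (p + 1) \<le> real_of_int (2 ^ L)"
    by (simp_all add: pos_le_divide_eq pos_divide_le_eq)
  then have "0 \<le> p" "p + 1 \<le> 2 ^ L"
    by (simp_all only: of_int_le_iff of_int_0_le_iff)
  then have "nat p < 2 ^ L" "real (nat p) = of_int p"
    by (simp_all add: nat_less_iff)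
  moreover from this(2) have "cell_branch f M i L (nat p)"
    using fx by (simp add: cell_branch_def)
  ultimately show thesis
    using that by blast
qed

lemma dyadic_cell_subset_piece:
  assumes xs: "subdivision01 xs" and lv: "\<forall>x\<in>set xs. dyadic_level M x" and i: "i < 2 ^ M"
  obtains j where "j < length xs - 1" "dyadic_cell M i \<subseteq> {xs!j .. xs!(j+1)}"
proof -
  have "0 \<le> real i / 2 ^ M" "real i / 2 ^ M < 1"
    using i by (simp_all add: field_simps)
  then obtain j where j: "j < length xs - 1" "xs!j \<le> real i / 2 ^ M" "real i / 2 ^ M < xs!(j+1)"
    using subdivision01_bracket[OF xs] by metis
  have "xs!(j+1) \<in> set xs"
    using j(1) by simp
  then obtain m where m: "xs!(j+1) = of_int m / 2 ^ M"
    using lv by (auto simp: dyadic_level_def)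
  have "real i / 2 ^ M < of_int m / 2 ^ M"
    using j(3) by (simp only: m)
  then have "real_of_int (int i) < of_int m"
    by (simp add: divide_less_cancel)
  then have "int i < m"
    by (simp only: of_int_less_iff)
  then have "real i + 1 \<le> of_int m"
    by linarith
  then have "(real i + 1) / 2 ^ M \<le> xs!(j+1)"
    unfolding m by (simp add: divide_right_mono)
  then show thesis
    using that j by (auto simp: dyadic_cell_def)
qed

lemma thompsonF_bounded_pieces:
  assumes f: "f \<in> thompsonF_set"
  obtains xs K V where "subdivision01 xs" "\<forall>x\<in>set xs. dyadic_level V x"
    "\<forall>j < length xs - 1. \<exists>(k::int) b. \<bar>k\<bar> \<le> int K \<and> dyadic_level V b \<and>
       (\<forall>x\<in>{xs!j .. xs!(j+1)}. f x = 2 powi k * x + b)"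
proof -
  obtain xs where xs: "subdivision01 xs" and dy: "\<forall>x\<in>set xs. dyadic x" and "\<forall>x\<in>set xs. dyadic (f x)"
    and pieces: "\<forall>j < length xs - 1. \<exists>(k::int) b. dyadic b \<and> (\<forall>x\<in>{xs!j .. xs!(j+1)}. f x = 2 powi k * x + b)"
    using f by (rule thompsonF_dyadic_pieces)
  define P where "P = length xs - 1"
  obtain k b where kb: "\<And>j. j < P \<Longrightarrow> dyadic (b j) \<and> (\<forall>x\<in>{xs!j .. xs!(j+1)}. f x = 2 powi k j * x + b j)"
    using pieces unfolding P_def by metis
  obtain V where V: "\<forall>x \<in> set xs \<union> b ` {..<P}. dyadic_level V x"
    using dyadic_level_finite[of "set xs \<union> b ` {..<P}"] dy kb by blast
  define K where "K = Max ((\<lambda>j. nat \<bar>k j\<bar>) ` {..<P})"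
  have "\<bar>k j\<bar> \<le> int K" if "j < P" for j
  proof -
    have "nat \<bar>k j\<bar> \<le> K"
      unfolding K_def using that by (intro Max_ge) auto
    then show ?thesis
      by linarith
  qed
  then have "\<forall>j < length xs - 1. \<exists>(k::int) b. \<bar>k\<bar> \<le> int K \<and> dyadic_level V b \<and>
       (\<forall>x\<in>{xs!j .. xs!(j+1)}. f x = 2 powi k * x + b)"
    using kb V unfolding P_def by blast
  then show thesis
    using that xs V by blast
qed

lemma thompsonF_cell_branches:
  assumes f: "f \<in> thompsonF_set"
  obtains M0 where "\<forall>M\<ge>M0. \<forall>i<2 ^ M. \<exists>L n. N \<le> L \<and> n < 2 ^ L \<and> cell_branch f M i L n"
proof -
  obtain xs K V where xs: "subdivision01 xs" and V: "\<forall>x\<in>set xs. dyadic_level V x"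
    and pieces: "\<forall>j < length xs - 1. \<exists>(k::int) b. \<bar>k\<bar> \<le> int K \<and> dyadic_level V b \<and>
       (\<forall>x\<in>{xs!j .. xs!(j+1)}. f x = 2 powi k * x + b)"
    using f by (rule thompsonF_bounded_pieces)
  (* Beyond level V + K + N every cell lies in one piece, of slope 2 powi k with |k| <= K,
     which maps it onto a cell of level M - k >= V, where the intercept is a multiple of
     1 / 2^(M - k). *)
  have "\<exists>L n. N \<le> L \<and> n < 2 ^ L \<and> cell_branch f M i L n"
    if M: "V + K + N \<le> M" and i: "i < 2 ^ M" for M i
  proof -
    have "\<forall>x\<in>set xs. dyadic_level M x"
      using V M dyadic_level_mono[of V _ M] by auto
    then obtain j where j: "j < length xs - 1" and cell: "dyadic_cell M i \<subseteq> {xs!j .. xs!(j+1)}"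
      using dyadic_cell_subset_piece[OF xs _ i] by metis
    then obtain k b where kb: "\<bar>k\<bar> \<le> int K" "dyadic_level V b"
      "\<forall>x\<in>{xs!j .. xs!(j+1)}. f x = 2 powi k * x + b"
      using pieces by blast
    define L where "L = nat (int M - k)"
    have L: "int L = int M - k" "N \<le> L" "V \<le> L"
      using kb(1) M by (auto simp: L_def)
    have "\<forall>x\<in>dyadic_cell M i. f x = 2 powi (int M - int L) * x + b"
      using kb(3) cell L(1) by auto
    moreover have "dyadic_level L b"
      using kb(2) L(3) by (rule dyadic_level_mono)
    moreover have "f ` dyadic_cell M i \<subseteq> {0..1}"
      using dyadic_cell_subset[OF i] thompsonF_image[OF f] by blast
    ultimately obtain n where "n < 2 ^ L" "cell_branch f M i L n"
      by (rule cell_branch_of_affine)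
    then show ?thesis
      using L(2) by blast
  qed
  then show thesis
    using that[of "V + K + N"] by blast
qed

lemma thompsonF_memI_cells:
  assumes "\<forall>x. x \<notin> {0..1} \<longrightarrow> f x = x" "homeomorphism {0..1} {0..1} f g"
    and branches: "\<forall>i<2 ^ M. \<exists>L n. cell_branch f M i L n"
  shows "f \<in> thompsonF_set"
  unfolding thompsonF_set_def mem_Collect_eq
proof (intro conjI exI)
  show "\<forall>x. x \<notin> {0..1} \<longrightarrow> f x = x" "homeomorphism {0..1} {0..1} f g"
    using assms by blast+
  show "subdivision01 (uniform_subdivision M)"
    by (rule subdivision01_uniform)
  show "\<forall>x\<in>set (uniform_subdivision M). dyadic x"
    by (auto simp: uniform_subdivision_def dyadic_def intro!: exI[of _ M])
      (metis of_int_of_nat_eq)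
  show "\<forall>i < length (uniform_subdivision M) - 1. \<exists>(k::int) b.
      \<forall>x\<in>{uniform_subdivision M ! i .. uniform_subdivision M ! (i+1)}. f x = 2 powi k * x + b"
  proof (intro allI impI)
    fix i assume "i < length (uniform_subdivision M) - 1"
    then have i: "i < 2 ^ M"
      by simp
    then obtain L n where "cell_branch f M i L n"
      using branches by blast
    then show "\<exists>(k::int) b. \<forall>x\<in>{uniform_subdivision M ! i .. uniform_subdivision M ! (i+1)}.
        f x = 2 powi k * x + b"
      unfolding uniform_subdivision_piece[OF i] by (blast dest: cell_branch_affine)
  qed
qed

lemma thompsonF_comp_closed:
  assumes f: "f \<in> thompsonF_set" and g: "g \<in> thompsonF_set"
  shows "f \<circ> g \<in> thompsonF_set"
proof -
  obtain Mf where Mf: "\<forall>M\<ge>Mf. \<forall>i<2 ^ M. \<exists>L n. 0 \<le> L \<and> n < 2 ^ L \<and> cell_branch f M i L n"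
    using f by (rule thompsonF_cell_branches)
  obtain Mg where Mg: "\<forall>M\<ge>Mg. \<forall>i<2 ^ M. \<exists>L n. Mf \<le> L \<and> n < 2 ^ L \<and> cell_branch g M i L n"
    using g by (rule thompsonF_cell_branches)
  obtain hf hg where "homeomorphism {0..1} {0..1} f hf" "homeomorphism {0..1} {0..1} g hg"
    using f g thompsonF_homeomorphism by metis
  then have "homeomorphism {0..1} {0..1} (f \<circ> g) (hg \<circ> hf)"
    using homeomorphism_compose by blast
  moreover have "\<forall>x. x \<notin> {0..1} \<longrightarrow> (f \<circ> g) x = x"
  proof (intro allI impI)
    fix x :: real assume x: "x \<notin> {0..1}"
    show "(f \<circ> g) x = x"
      using thompsonF_fixes_outside[OF f x] thompsonF_fixes_outside[OF g x] by simp
  qed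
  moreover have "\<exists>L' n'. cell_branch (f \<circ> g) Mg i L' n'" if i: "i < 2 ^ Mg" for i
  proof -
    obtain L n where "Mf \<le> L" "n < 2 ^ L" and g_branch: "cell_branch g Mg i L n"
      using Mg i by blast
    then obtain L' n' where "cell_branch f L n L' n'"
      using Mf by blast
    then show ?thesis
      using cell_branch_comp[OF g_branch] by blast
  qed
  ultimately show ?thesis
    using thompsonF_memI_cells by blast
qed

lemma thompsonF_id: "id \<in> thompsonF_set"
proof (rule thompsonF_memI_cells)
  show "homeomorphism {0..1} {0..1} id id"
    unfolding id_def by (rule homeomorphism_ident)
  show "\<forall>i<2 ^ 0. \<exists>L n. cell_branch id 0 i L n"
    by (auto simp: cell_branch_def intro!: exI[of _ 0])
qed simp

lemma thompsonF_simps [simp]: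
  "carrier thompsonF = thompsonF_set" "mult thompsonF f g = f \<circ> g" "one thompsonF = id"
  by (simp_all add: thompsonF_def)

lemma group_thompsonF: "group thompsonF"
proof (rule groupI)
  fix f assume "f \<in> carrier thompsonF"
  then obtain g where "g \<in> thompsonF_set" "g \<circ> f = id"
    using thompsonF_inverse by (metis thompsonF_simps(1))
  then show "\<exists>g\<in>carrier thompsonF. g \<otimes>\<^bsub>thompsonF\<^esub> f = \<one>\<^bsub>thompsonF\<^esub>"
    by auto
qed (auto simp: thompsonF_comp_closed thompsonF_id o_assoc)

lemma thompsonF_inv:
  assumes "f \<in> thompsonF_set"
  shows "inv\<^bsub>thompsonF\<^esub> f \<in> thompsonF_set" "f \<circ> inv\<^bsub>thompsonF\<^esub> f = id" "inv\<^bsub>thompsonF\<^esub> f \<circ> f = id"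
  using group.inv_closed[OF group_thompsonF] group.r_inv[OF group_thompsonF]
    group.l_inv[OF group_thompsonF] assms by simp_all

definition linear_germ0 :: "real \<Rightarrow> (real \<Rightarrow> real) \<Rightarrow> bool" where
  "linear_germ0 c f \<longleftrightarrow> (\<exists>e>0. \<forall>x\<in>{0..e}. f x = c * x)"

lemma linear_germ0_comp:
  assumes f: "linear_germ0 c f" and g: "linear_germ0 d g" and "0 \<le> d"
  shows "linear_germ0 (c * d) (f \<circ> g)"
proof -
  obtain e1 where e1: "e1 > 0" "\<forall>x\<in>{0..e1}. f x = c * x"
    using f by (auto simp: linear_germ0_def)
  obtain e2 where e2: "e2 > 0" "\<forall>x\<in>{0..e2}. g x = d * x"
    using g by (auto simp: linear_germ0_def)
  define e where "e = min e2 (e1 / (d + 1))"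
  have "e > 0"
    using e1 e2 \<open>0 \<le> d\<close> by (simp add: e_def)
  moreover have "(f \<circ> g) x = c * d * x" if x: "x \<in> {0..e}" for x
  proof -
    have "(d + 1) * x \<le> e1"
      using x \<open>0 \<le> d\<close> by (simp add: e_def pos_le_divide_eq mult.commute)
    then have "d * x \<in> {0..e1}"
      using x \<open>0 \<le> d\<close> by (simp add: algebra_simps)
    moreover have "g x = d * x"
      using x e2 by (simp add: e_def)
    ultimately show ?thesis
      using e1 by simp
  qed
  ultimately show ?thesis
    unfolding linear_germ0_def by blast
qed

lemma linear_germ0_unique:
  assumes "linear_germ0 c f" "linear_germ0 d f"
  shows "c = d"
proof -
  obtain e1 e2 where e: "e1 > 0" "\<forall>x\<in>{0..e1}. f x = c * x" "e2 > 0" "\<forall>x\<in>{0..e2}. f x = d * x"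
    using assms by (auto simp: linear_germ0_def)
  define x where "x = min e1 e2"
  have "x \<in> {0..e1}" "x \<in> {0..e2}" "x > 0"
    using e by (auto simp: x_def)
  then have "c * x = d * x" "x \<noteq> 0"
    using e(2,4) by (metis, simp)
  then show ?thesis
    by simp
qed

lemma linear_germ0_inverse:
  assumes "linear_germ0 c f" "linear_germ0 c' g" "0 \<le> c" "g \<circ> f = id"
  shows "c' * c = 1"
proof -
  have "linear_germ0 (c' * c) id"
    using linear_germ0_comp[OF assms(2,1,3)] assms(4) by simp
  moreover have "linear_germ0 1 id"
    by (auto simp: linear_germ0_def intro: exI[of _ 1])
  ultimately show ?thesis
    by (rule linear_germ0_unique)
qed

lemma linear_germ0_commutator:
  assumes "\<exists>a>0. linear_germ0 a f" "\<exists>b>0. linear_germ0 b g"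
    and "\<exists>a'>0. linear_germ0 a' f'" "\<exists>b'>0. linear_germ0 b' g'"
    and "f' \<circ> f = id" "g' \<circ> g = id"
  shows "linear_germ0 1 (f \<circ> g \<circ> f' \<circ> g')"
proof -
  obtain a b a' b' where germs: "0 < a" "linear_germ0 a f" "0 < b" "linear_germ0 b g"
    "0 < a'" "linear_germ0 a' f'" "0 < b'" "linear_germ0 b' g'"
    using assms(1-4) by blast
  have "a' * a = 1" "b' * b = 1"
    using linear_germ0_inverse germs assms(5,6) by (meson less_imp_le)+
  moreover have "linear_germ0 (a * b * a' * b') (f \<circ> g \<circ> f' \<circ> g')"
    using germs by (intro linear_germ0_comp) auto
  ultimately show ?thesis
    by (simp add: algebra_simps)
qed

(* Conjugation by x \<mapsto> 1 - x turns the germ at 1 into a germ at 0. *)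
definition reflect :: "(real \<Rightarrow> real) \<Rightarrow> real \<Rightarrow> real" where
  "reflect f x = 1 - f (1 - x)"

lemma reflect_comp: "reflect (f \<circ> g) = reflect f \<circ> reflect g"
  by (auto simp: reflect_def)

lemma reflect_id: "reflect id = id"
  by (auto simp: reflect_def)

lemma thompsonF_linear_germ0:
  assumes f: "f \<in> thompsonF_set"
  shows "\<exists>c>0. linear_germ0 c f"
proof -
  obtain xs where xs: "subdivision01 xs"
    and pieces: "\<forall>j < length xs - 1. \<exists>(k::int) b. \<forall>x\<in>{xs!j .. xs!(j+1)}. f x = 2 powi k * x + b"
    using f by (rule thompsonF_pieces)
  have len: "0 < length xs - 1"
    using subdivision01_length[OF xs] by simp
  obtain k b where kb: "\<forall>x\<in>{xs!0 .. xs!(0+1)}. f x = 2 powi k * x + b"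
    using pieces len by blast
  have "0 < xs!1"
    using subdivision01_piece_less[OF xs len] subdivision01_nth_first[OF xs] by simp
  moreover have "b = 0"
    using kb \<open>0 < xs!1\<close> thompsonF_endpoints(1)[OF f] subdivision01_nth_first[OF xs] by auto
  ultimately have "linear_germ0 (2 powi k) f"
    using kb subdivision01_nth_first[OF xs] unfolding linear_germ0_def by auto
  moreover have "(0::real) < 2 powi k"
    by simp
  ultimately show ?thesis
    by blast
qed

lemma thompsonF_linear_germ0_reflect:
  assumes f: "f \<in> thompsonF_set"
  shows "\<exists>c>0. linear_germ0 c (reflect f)"
proof -
  obtain xs where xs: "subdivision01 xs"
    and pieces: "\<forall>j < length xs - 1. \<exists>(k::int) b. \<forall>x\<in>{xs!j .. xs!(j+1)}. f x = 2 powi k * x + b"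
    using f by (rule thompsonF_pieces)
  define j where "j = length xs - 2"
  have j1: "j + 1 = length xs - 1"
    using subdivision01_length[OF xs] by (simp add: j_def)
  then have j: "j < length xs - 1"
    by linarith
  have last: "xs!(j+1) = 1"
    unfolding j1 by (rule subdivision01_nth_last[OF xs])
  obtain k b where kb: "\<forall>x\<in>{xs!j .. xs!(j+1)}. f x = 2 powi k * x + b"
    using pieces j by blast
  have "xs!j < 1"
    using subdivision01_piece_less[OF xs j] last by simp
  moreover have "b = 1 - 2 powi k"
    using kb \<open>xs!j < 1\<close> last thompsonF_endpoints(2)[OF f] by auto
  ultimately have "\<forall>y\<in>{0..1 - xs!j}. reflect f y = 2 powi k * y"
    using kb last by (auto simp: reflect_def algebra_simps)
  then have "linear_germ0 (2 powi k) (reflect f)"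
    using \<open>xs!j < 1\<close> unfolding linear_germ0_def by (intro exI[of _ "1 - xs!j"]) auto
  moreover have "(0::real) < 2 powi k"
    by simp
  ultimately show ?thesis
    by blast
qed

definition compactly_supported_F :: "(real \<Rightarrow> real) set" where
  "compactly_supported_F = {f \<in> thompsonF_set. \<exists>e>0. \<forall>x. x \<le> e \<or> 1 - e \<le> x \<longrightarrow> f x = x}"

lemma compactly_supported_FI:
  assumes f: "f \<in> thompsonF_set" and "linear_germ0 1 f" "linear_germ0 1 (reflect f)"
  shows "f \<in> compactly_supported_F"
proof -
  obtain e1 e2 where e: "e1 > 0" "\<forall>x\<in>{0..e1}. f x = x" "e2 > 0" "\<forall>x\<in>{0..e2}. reflect f x = x"
    using assms by (auto simp: linear_germ0_def)
  have "f x = x" if "x \<le> min e1 e2 \<or> 1 - min e1 e2 \<le> x" for x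
  proof (cases "x \<in> {0..1}")
    case True
    then show ?thesis
      using that e(2) e(4)[rule_format, of "1 - x"] by (auto simp: reflect_def)
  qed (use thompsonF_fixes_outside[OF f] in blast)
  then show ?thesis
    using f e unfolding compactly_supported_F_def by (intro CollectI conjI exI[of _ "min e1 e2"]) auto
qed

lemma commutator_compactly_supported_F:
  assumes f: "f \<in> thompsonF_set" and g: "g \<in> thompsonF_set"
  shows "f \<circ> g \<circ> inv\<^bsub>thompsonF\<^esub> f \<circ> inv\<^bsub>thompsonF\<^esub> g \<in> compactly_supported_F"
proof -
  define f' where "f' = inv\<^bsub>thompsonF\<^esub> f"
  define g' where "g' = inv\<^bsub>thompsonF\<^esub> g"
  have f': "f' \<in> thompsonF_set" "f' \<circ> f = id" and g': "g' \<in> thompsonF_set" "g' \<circ> g = id"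
    using thompsonF_inv f g by (auto simp: f'_def g'_def)
  have "linear_germ0 1 (f \<circ> g \<circ> f' \<circ> g')"
    by (rule linear_germ0_commutator) (use thompsonF_linear_germ0 f g f' g' in auto)
  moreover have "linear_germ0 1 (reflect f \<circ> reflect g \<circ> reflect f' \<circ> reflect g')"
    by (rule linear_germ0_commutator)
      (use thompsonF_linear_germ0_reflect f g f' g' in \<open>auto simp flip: reflect_comp simp: reflect_id\<close>)
  ultimately show ?thesis
    using f g f' g' thompsonF_comp_closed
    by (intro compactly_supported_FI) (simp_all add: f'_def g'_def reflect_comp)
qed

lemma subgroup_compactly_supported_F: "subgroup compactly_supported_F thompsonF"
proof
  show "compactly_supported_F \<subseteq> carrier thompsonF"
    by (auto simp: compactly_supported_F_def)
  show "\<one>\<^bsub>thompsonF\<^esub> \<in> compactly_supported_F"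
    using thompsonF_id by (auto simp: compactly_supported_F_def intro: exI[of _ 1])
next
  fix f g assume "f \<in> compactly_supported_F" "g \<in> compactly_supported_F"
  then obtain e1 e2 where "f \<in> thompsonF_set" "e1 > 0" "\<forall>x. x \<le> e1 \<or> 1 - e1 \<le> x \<longrightarrow> f x = x"
    "g \<in> thompsonF_set" "e2 > 0" "\<forall>x. x \<le> e2 \<or> 1 - e2 \<le> x \<longrightarrow> g x = x"
    by (auto simp: compactly_supported_F_def)
  then show "f \<otimes>\<^bsub>thompsonF\<^esub> g \<in> compactly_supported_F"
    unfolding compactly_supported_F_def
    by (intro CollectI conjI exI[of _ "min e1 e2"]) (auto simp: thompsonF_comp_closed)
next
  fix f assume "f \<in> compactly_supported_F"
  then obtain e where f: "f \<in> thompsonF_set" "e > 0" "\<forall>x. x \<le> e \<or> 1 - e \<le> x \<longrightarrow> f x = x"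
    by (auto simp: compactly_supported_F_def)
  have "(inv\<^bsub>thompsonF\<^esub> f) x = x" if "x \<le> e \<or> 1 - e \<le> x" for x
    using thompsonF_inv(3)[OF f(1)] f(3) that by (metis comp_apply id_apply)
  then show "inv\<^bsub>thompsonF\<^esub> f \<in> compactly_supported_F"
    using thompsonF_inv(1)[OF f(1)] f(2) by (auto simp: compactly_supported_F_def)
qed

lemma derived_thompsonF_subset: "derived thompsonF (carrier thompsonF) \<subseteq> compactly_supported_F"
  unfolding derived_def
  by (rule group.generate_subgroup_incl[OF group_thompsonF _ subgroup_compactly_supported_F])
    (auto intro: commutator_compactly_supported_F)

fun binary_word :: "nat \<Rightarrow> nat \<Rightarrow> bool list" where
  "binary_word 0 j = []"
| "binary_word (Suc M) j = binary_word M (j div 2) @ [odd j]"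

lemma length_binary_word [simp]: "length (binary_word M j) = M"
  by (induction M arbitrary: j) auto

lemma word_val_snoc: "word_val (u @ [b]) = word_val u + (if b then 1 else 0) / 2 ^ Suc (length u)"
  unfolding word_val_def by (simp add: nth_append)

lemma mod_Suc_two_power: "(j::nat) mod 2 ^ Suc M = 2 * (j div 2 mod 2 ^ M) + j mod 2"
  using mod_mult2_eq[of j 2 "2 ^ M"] by simp

lemma word_val_binary_word: "word_val (binary_word M j) = real (j mod 2 ^ M) / 2 ^ M"
proof (induction M arbitrary: j)
  case 0
  then show ?case
    by (simp add: word_val_def)
next
  case (Suc M)
  have "word_val (binary_word (Suc M) j)
      = real (j div 2 mod 2 ^ M) / 2 ^ M + (if odd j then 1 else 0) / 2 ^ Suc M"
    by (simp add: word_val_snoc Suc)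
  also have "\<dots> = (2 * real (j div 2 mod 2 ^ M) + real (j mod 2)) / 2 ^ Suc M"
    by (auto simp: field_simps odd_iff_mod_2_eq_one even_iff_mod_2_eq_zero)
  also have "\<dots> = real (j mod 2 ^ Suc M) / 2 ^ Suc M"
    unfolding mod_Suc_two_power[of j M] by simp
  finally show ?case .
qed

lemma True_in_binary_word: "True \<in> set (binary_word M j) \<longleftrightarrow> j mod 2 ^ M \<noteq> 0"
proof (induction M arbitrary: j)
  case (Suc M)
  define r where "r = j div 2 mod 2 ^ M"
  have "True \<in> set (binary_word (Suc M) j) \<longleftrightarrow> r \<noteq> 0 \<or> odd j"
    by (auto simp: Suc r_def)
  also have "\<dots> \<longleftrightarrow> 2 * r + j mod 2 \<noteq> 0"
    by presburger
  also have "\<dots> \<longleftrightarrow> j mod 2 ^ Suc M \<noteq> 0"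
    unfolding mod_Suc_two_power[of j M] r_def by simp
  finally show ?case .
qed simp

lemma False_in_binary_word: "False \<in> set (binary_word M j) \<longleftrightarrow> j mod 2 ^ M \<noteq> 2 ^ M - 1"
proof (induction M arbitrary: j)
  case (Suc M)
  define P :: nat where "P = 2 ^ M"
  define r where "r = j div 2 mod 2 ^ M"
  have "r < P" "0 < P"
    by (simp_all add: r_def P_def)
  have "False \<in> set (binary_word (Suc M) j) \<longleftrightarrow> r \<noteq> P - 1 \<or> even j"
    by (auto simp: Suc r_def P_def)
  also have "\<dots> \<longleftrightarrow> 2 * r + j mod 2 \<noteq> 2 * P - 1"
    using \<open>r < P\<close> \<open>0 < P\<close> by presburger
  also have "\<dots> \<longleftrightarrow> j mod 2 ^ Suc M \<noteq> 2 ^ Suc M - 1"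
    unfolding mod_Suc_two_power[of j M] r_def P_def by simp
  finally show ?case .
qed simp

lemma floor_double: "\<lfloor>2 * a\<rfloor> = 2 * \<lfloor>a\<rfloor> + (if odd \<lfloor>2 * a\<rfloor> then 1 else 0)" for a :: real
proof -
  have "2 * \<lfloor>a\<rfloor> \<le> \<lfloor>2 * a\<rfloor>" "\<lfloor>2 * a\<rfloor> < 2 * \<lfloor>a\<rfloor> + 2"
    by linarith+
  then show ?thesis
    by presburger
qed

lemma binary_digits_partial_sum:
  fixes y :: real
  assumes "0 \<le> y" "y < 1"
  shows "(\<Sum>i<n. (if odd \<lfloor>y * 2 ^ Suc i\<rfloor> then 1 else 0) / 2 ^ Suc i) = of_int \<lfloor>y * 2 ^ n\<rfloor> / (2::real) ^ n"
proof (induction n)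
  case 0
  have "\<lfloor>y\<rfloor> = 0"
    using assms by (simp add: floor_eq_iff)
  then show ?case
    by simp
next
  case (Suc n)
  define z where "z = \<lfloor>y * 2 ^ Suc n\<rfloor>"
  define w where "w = \<lfloor>y * 2 ^ n\<rfloor>"
  have "z = 2 * w + (if odd z then 1 else 0)"
    using floor_double[of "y * 2 ^ n"] by (simp add: z_def w_def mult_ac)
  then have "real_of_int z = of_int (2 * w + (if odd z then 1 else 0))"
    by (rule arg_cong)
  then have z: "real_of_int z = 2 * of_int w + (if odd z then 1 else 0)"
    by simp
  have "(\<Sum>i<Suc n. (if odd \<lfloor>y * 2 ^ Suc i\<rfloor> then 1 else 0) / (2::real) ^ Suc i)
      = of_int w / 2 ^ n + (if odd z then 1 else 0) / 2 ^ Suc n"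
    unfolding sum.lessThan_Suc Suc.IH by (simp add: z_def w_def)
  also have "\<dots> = of_int z / 2 ^ Suc n"
    unfolding z by (simp add: field_simps)
  finally show ?case
    by (simp add: z_def)
qed

lemma floor_dyadic_approx_tendsto: "(\<lambda>n. of_int \<lfloor>y * 2 ^ n\<rfloor> / 2 ^ n) \<longlonglongrightarrow> (y::real)"
proof (rule tendsto_sandwich[of "\<lambda>n. y - (1/2) ^ n" _ _ "\<lambda>n. y"])
  show "\<forall>\<^sub>F n in sequentially. y - (1/2) ^ n \<le> of_int \<lfloor>y * 2 ^ n\<rfloor> / 2 ^ n"
  proof (intro always_eventually allI)
    fix n :: nat
    have "(y * 2 ^ n - 1) / 2 ^ n \<le> of_int \<lfloor>y * 2 ^ n\<rfloor> / (2::real) ^ n"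
      by (rule divide_right_mono) (linarith, simp)
    then show "y - (1/2) ^ n \<le> of_int \<lfloor>y * 2 ^ n\<rfloor> / 2 ^ n"
      by (simp add: diff_divide_distrib power_one_over)
  qed
  show "\<forall>\<^sub>F n in sequentially. of_int \<lfloor>y * 2 ^ n\<rfloor> / 2 ^ n \<le> y"
  proof (intro always_eventually allI)
    fix n :: nat
    have "of_int \<lfloor>y * 2 ^ n\<rfloor> \<le> y * 2 ^ n"
      by linarith
    then show "of_int \<lfloor>y * 2 ^ n\<rfloor> / 2 ^ n \<le> y"
      by (simp add: field_simps)
  qed
  have "(\<lambda>n. (1/2::real) ^ n) \<longlonglongrightarrow> 0"
    by (rule LIMSEQ_realpow_zero) auto
  then show "(\<lambda>n. y - (1/2) ^ n) \<longlonglongrightarrow> y"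
    using tendsto_diff[of "\<lambda>n. y" y sequentially] by force
qed simp

lemma inf_val_surj:
  assumes "0 \<le> y" "y \<le> 1"
  obtains \<alpha> where "inf_val \<alpha> = y"
proof (cases "y = 1")
  case True
  have "(\<lambda>n. (1/2::real) ^ Suc n) sums 1"
    by (rule power_half_series)
  then have "inf_val (\<lambda>_. True) = y"
    unfolding inf_val_def True by (simp add: sums_iff power_one_over)
  then show thesis
    by (rule that)
next
  case False
  define \<alpha> where "\<alpha> i = odd \<lfloor>y * 2 ^ Suc i\<rfloor>" for i
  have "(\<Sum>i<n. (if \<alpha> i then 1 else 0) / 2 ^ Suc i) = of_int \<lfloor>y * 2 ^ n\<rfloor> / (2::real) ^ n" for n
    using binary_digits_partial_sum[OF assms(1)] False assms(2) by (simp add: \<alpha>_def)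
  then have "(\<lambda>i. (if \<alpha> i then 1 else 0) / 2 ^ Suc i) sums y"
    unfolding sums_def using floor_dyadic_approx_tendsto by simp
  then have "inf_val \<alpha> = y"
    unfolding inf_val_def by (simp add: sums_iff)
  then show thesis
    by (rule that)
qed

lemma has_branches_cell_branch:
  assumes h: "has_branches h (binary_word M i) (binary_word L n)" and "i < 2 ^ M" "n < 2 ^ L"
  shows "cell_branch h M i L n"
  unfolding cell_branch_def
proof
  fix x assume "x \<in> dyadic_cell M i"
  then have "0 \<le> 2 ^ M * x - real i" "2 ^ M * x - real i \<le> 1"
    by (simp_all add: dyadic_cell_iff)
  then obtain \<alpha> where \<alpha>: "inf_val \<alpha> = 2 ^ M * x - real i"
    by (rule inf_val_surj)
  have "x = word_val (binary_word M i) + inf_val \<alpha> / 2 ^ length (binary_word M i)"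
    using \<open>i < 2 ^ M\<close> by (simp add: word_val_binary_word \<alpha> field_simps)
  then have "h x = word_val (binary_word L n) + inf_val \<alpha> / 2 ^ length (binary_word L n)"
    using h unfolding has_branches_def by metis
  then show "h x = (real n + 2 ^ M * x - real i) / 2 ^ L"
    using \<open>n < 2 ^ L\<close> by (simp add: word_val_binary_word \<alpha> add_divide_distrib[symmetric] add_diff_eq)
qed

lemma thompsonF_cell_branch_interior:
  assumes f: "f \<in> thompsonF_set" and br: "cell_branch f M i L n" and "0 < i" "i + 1 < 2 ^ M"
  shows "0 < n" "n + 1 < 2 ^ L"
proof -
  have lo: "real i / 2 ^ M \<in> dyadic_cell M i" and hi: "(real i + 1) / 2 ^ M \<in> dyadic_cell M i"
    by (auto simp: dyadic_cell_def divide_right_mono)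
  have "real (i + 1) < 2 ^ M"
    using \<open>i + 1 < 2 ^ M\<close> by (simp only: of_nat_less_numeral_power_cancel_iff)
  then have "0 < real i / 2 ^ M" "(real i + 1) / 2 ^ M < 1"
    using \<open>0 < i\<close> by (simp_all add: field_simps)
  moreover have "real i / 2 ^ M \<in> {0..1}" "(real i + 1) / 2 ^ M \<in> {0..1}"
    using lo hi dyadic_cell_subset[of i M] \<open>i + 1 < 2 ^ M\<close> by auto
  ultimately have "f 0 < f (real i / 2 ^ M)" "f ((real i + 1) / 2 ^ M) < f 1"
    using monotone_onD[OF thompsonF_strict_mono[OF f], of 0 "real i / 2 ^ M"]
      monotone_onD[OF thompsonF_strict_mono[OF f], of "(real i + 1) / 2 ^ M" 1] by auto
  moreover have "f (real i / 2 ^ M) = real n / 2 ^ L" "f ((real i + 1) / 2 ^ M) = (real n + 1) / 2 ^ L"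
    using br lo hi by (simp_all add: cell_branch_def)
  ultimately have "0 < real n" "real (n + 1) < 2 ^ L"
    using thompsonF_endpoints[OF f] by (simp_all add: divide_less_eq zero_less_divide_iff)
  then show "0 < n" "n + 1 < 2 ^ L"
    by (simp_all only: of_nat_0_less_iff of_nat_less_numeral_power_cancel_iff)
qed

lemma thompson_closureI_cells:
  assumes "f \<in> thompsonF_set" and cells: "\<forall>i<2 ^ M. \<exists>g\<in>H. \<forall>x\<in>dyadic_cell M i. f x = g x"
  shows "f \<in> thompson_closure H"
  unfolding thompson_closure_def
proof (intro CollectI conjI exI)
  show "\<forall>i < length (uniform_subdivision M) - 1. \<exists>g\<in>H.
      \<forall>x\<in>{uniform_subdivision M ! i .. uniform_subdivision M ! (i+1)}. f x = g x"
    using cells uniform_subdivision_piece by simp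
qed (use assms subdivision01_uniform in auto)

lemma end_cells_fixed:
  assumes fix_ends: "\<forall>x. x \<le> e \<or> 1 - e \<le> x \<longrightarrow> f x = x" and "1 / 2 ^ M \<le> e"
    and "i = 0 \<or> i + 1 = 2 ^ M"
  shows "\<forall>x\<in>dyadic_cell M i. f x = x"
proof
  fix x assume x: "x \<in> dyadic_cell M i"
  have "x \<le> e \<or> 1 - e \<le> x"
  proof (cases "i = 0")
    case False
    then have "i + 1 = 2 ^ M"
      using assms(3) by simp
    then have "real (i + 1) = 2 ^ M"
      by (simp only: real_of_nat_eq_numeral_power_cancel_iff)
    then have "real i / 2 ^ M = 1 - 1 / 2 ^ M"
      by (simp add: field_simps)
    then show ?thesis
      using x assms(2) by (auto simp: dyadic_cell_def)
  qed (use x assms(2) in \<open>auto simp: dyadic_cell_def\<close>)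
  then show "f x = x"
    using fix_ends by blast
qed

lemma interior_cell_branch_in_subgroup:
  assumes branches: "\<And>u v. True \<in> set u \<Longrightarrow> False \<in> set u \<Longrightarrow> True \<in> set v \<Longrightarrow> False \<in> set v
           \<Longrightarrow> \<exists>h\<in>H. has_branches h u v"
    and f: "f \<in> thompsonF_set" and br: "cell_branch f M i L n" "n < 2 ^ L"
    and i: "0 < i" "i + 1 < 2 ^ M"
  shows "\<exists>h\<in>H. \<forall>x\<in>dyadic_cell M i. f x = h x"
proof -
  have n: "0 < n" "n + 1 < 2 ^ L"
    using thompsonF_cell_branch_interior[OF f br(1) i] by auto
  have "True \<in> set (binary_word M i)" "False \<in> set (binary_word M i)"
    "True \<in> set (binary_word L n)" "False \<in> set (binary_word L n)"
    using i n by (simp_all add: True_in_binary_word False_in_binary_word)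
  then obtain h where "h \<in> H" "has_branches h (binary_word M i) (binary_word L n)"
    using branches by blast
  then have "cell_branch h M i L n"
    using has_branches_cell_branch i(2) br(2) by simp
  then have "\<forall>x\<in>dyadic_cell M i. f x = h x"
    using br(1) by (simp add: cell_branch_def)
  then show ?thesis
    using \<open>h \<in> H\<close> by blast
qed

lemma compactly_supported_F_subset_closure:
  assumes "subgroup H thompsonF"
    and branches: "\<And>u v. True \<in> set u \<Longrightarrow> False \<in> set u \<Longrightarrow> True \<in> set v \<Longrightarrow> False \<in> set v
           \<Longrightarrow> \<exists>h\<in>H. has_branches h u v"
  shows "compactly_supported_F \<subseteq> thompson_closure H"
proof
  fix f assume "f \<in> compactly_supported_F"
  then obtain e where f: "f \<in> thompsonF_set" "e > 0" "\<forall>x. x \<le> e \<or> 1 - e \<le> x \<longrightarrow> f x = x"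
    by (auto simp: compactly_supported_F_def)
  obtain M0 where M0: "\<forall>M\<ge>M0. \<forall>i<2 ^ M. \<exists>L n. 0 \<le> L \<and> n < 2 ^ L \<and> cell_branch f M i L n"
    using f(1) by (rule thompsonF_cell_branches)
  obtain k where "(1/2::real) ^ k < e"
    using real_arch_pow_inv[OF f(2), of "1/2"] by auto
  then have M: "1 / 2 ^ (M0 + k) \<le> e"
    using power_decreasing[of k "M0 + k" "1/2::real"] by (simp add: power_one_over)
  have "\<exists>g\<in>H. \<forall>x\<in>dyadic_cell (M0 + k) i. f x = g x" if i: "i < 2 ^ (M0 + k)" for i
  proof (cases "i = 0 \<or> i + 1 = 2 ^ (M0 + k)")
    case True
    then have "\<forall>x\<in>dyadic_cell (M0 + k) i. f x = id x"
      using end_cells_fixed[OF f(3) M] by simp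
    moreover have "id \<in> H"
      using subgroup.one_closed[OF assms(1)] by simp
    ultimately show ?thesis
      by blast
  next
    case False
    then have "0 < i" "i + 1 < 2 ^ (M0 + k)"
      using i by auto
    moreover obtain L n where "n < 2 ^ L" "cell_branch f (M0 + k) i L n"
      using M0[rule_format, OF le_add1 i] by blast
    ultimately show ?thesis
      using interior_cell_branch_in_subgroup[OF branches f(1)] by blast
  qed
  then show "f \<in> thompson_closure H"
    using f(1) thompson_closureI_cells by blast
qed

theorem lemma2p3:
  fixes H :: "(real \<Rightarrow> real) set"
  assumes "subgroup H thompsonF"
    and "\<And>u v. True \<in> set u \<Longrightarrow> False \<in> set u \<Longrightarrow> True \<in> set v \<Longrightarrow> False \<in> set v
           \<Longrightarrow> \<exists>h\<in>H. has_branches h u v"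
  shows "derived thompsonF (carrier thompsonF) \<subseteq> thompson_closure H"
  using derived_thompsonF_subset compactly_supported_F_subset_closure[OF assms] by blast

end
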